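(* Let $(\mathbb{E},\dot 1,\dot\times)$ with $L\dashv p$ be a weakly closed monoidal refinement of a symmetric monoidal closed category $(\mathbb{B},I,\otimes,\multimap)$ in which the monoidal structure of $\mathbb{E}$ is cartesian (finite products $\dot 1,\dot\times$), let $\mathcal{T}$ be a $\otimes$-strong monad on $\mathbb{B}$ and $(M,\le,1,\cdot)$ a preordered monoid. Then $\mathbf{Asign}_{\dot\times}(\mathcal{T},M)=\mathbf{Comp}(\mathcal{T},M)$: a monotone map $\Delta:(M,\le)\to\mathbf{Ord}(p,T)$ is an $M$-graded $\dot\times$-parameterized assignment of $\mathbb{E}$ on $\mathcal{T}$ if and only if it is an $M$-graded sequentially composable family of $\mathbb{E}$-objects above $\mathcal{T}$.
   Context: A weakly closed monoidal refinement of the SMCC $(\mathbb{B},I,\otimes,\multimap)$ (evaluation $ev$) is a symmetric monoidal category $(\mathbb{E},\dot I,\dot\otimes)$ — here the cartesian one $(\dot1,\dot\times)$ — with an adjunction $L\dashv p$, $p:\mathbb{E}\to\mathbb{B}$, such that (a) $p$ is strict symmetric monoidal and faithful; (b) the unit of the adjunction is the identity; (c) for each $X\in\mathbb{B}$, $-\dot\times LX$ has a right adjoint $X\dot\pitchfork-$; (d) $(p,p)$ is a map of adjunctions from $(-\dot\times LX\dashv X\dot\pitchfork-)$ to $(-\otimes X\dashv X\multimap-)$. For $X,Y\in\mathbb{E}$ and $f\in\mathbb{B}(pX,pY)$, $f:X\dot\to Y$ means $f=p\dot f$ for some $\dot f\in\mathbb{E}(X,Y)$. Since $p$ is a right adjoint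 and strict monoidal, $p(Z\dot\times W)=pZ\otimes pW$ is a product in $\mathbb{B}$, and $\langle\mathrm{id}_{pZ},f\rangle$ denotes pairing into it. $\mathcal{T}=(T,\eta,(-)^\dagger)$ is a monad on $\mathbb{B}$ with strength $\sigma$; $f^\ddagger=f^\dagger\circ\sigma$ for $f:X\otimes Y\to TZ$; $\mathrm{kl}_{X,Y}=(ev_{X,TY})^\ddagger$. $\mathbf{Ord}(p,T)$ is the class of maps $G:|\mathbb{B}|\to|\mathbb{E}|$ with $pGX=TX$, preordered by $G\le G'$ iff $\mathrm{id}_{TX}:GX\dot\to G'X$ for all $X$. $\mathbf{Asign}_{\dot\times}(\mathcal{T},M)$: monotone $\Delta:(M,\le)\to\mathbf{Ord}(p,T)$ such that $\mathrm{kl}_{X,Y}:(X\dot\pitchfork\Delta\alpha Y)\dot\times\Delta\beta X\dot\to\Delta(\beta\cdot\alpha)Y$ for all $\alpha,\beta,X,Y$. $\mathbf{Comp}(\mathcal{T},M)$: monotone $\Delta:(M,\le)\to\mathbf{Ord}(p,T)$ such that for all $\alpha,\beta\in M$, $Z\in\mathbb{E}$, $X,Y\in\mathbb{B}$, and $\mathbb{B}$-morphisms $f:pZ\to TX$, $g:pZ\otimes X\to TY$ with $f:Z\dot\to\Delta\alpha X$ and $g:Z\dot\times LX\dot\to\Delta\beta Y$, we have $g^\ddagger\circ\langle\mathrm{id}_{pZ},f\rangle:Z\dot\to\Delta(\alpha\cdot\beta)Y$. Both are subclasses of the class of monotone maps $(M,\le)\to\mathbf{Ord}(p,T)$. *)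

theory Defs
  imports Main
begin

record ('o,'m) cat =
  c_arr :: "'m set"
  c_dom :: "'m \<Rightarrow> 'o"
  c_cod :: "'m \<Rightarrow> 'o"
  c_cmp :: "'m \<Rightarrow> 'm \<Rightarrow> 'm"   (* c_cmp C g f = g \<circ> f *)
  c_id  :: "'o \<Rightarrow> 'm"

definition hom :: "('o,'m,'x) cat_scheme \<Rightarrow> 'o \<Rightarrow> 'o \<Rightarrow> 'm set" where
  "hom C X Y = {f \<in> c_arr C. c_dom C f = X \<and> c_cod C f = Y}"

definition category :: "('o,'m,'x) cat_scheme \<Rightarrow> bool" where
  "category C \<longleftrightarrow>
     (\<forall>X. c_id C X \<in> hom C X X) \<and>
     (\<forall>f g. f \<in> c_arr C \<longrightarrow> g \<in> c_arr C \<longrightarrow> c_cod C f = c_dom C g \<longrightarrow>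
        c_cmp C g f \<in> hom C (c_dom C f) (c_cod C g)) \<and>
     (\<forall>f. f \<in> c_arr C \<longrightarrow> c_cmp C (c_id C (c_cod C f)) f = f \<and> c_cmp C f (c_id C (c_dom C f)) = f) \<and>
     (\<forall>f g h. f \<in> c_arr C \<longrightarrow> g \<in> c_arr C \<longrightarrow> h \<in> c_arr C \<longrightarrow>
        c_cod C f = c_dom C g \<longrightarrow> c_cod C g = c_dom C h \<longrightarrow>
        c_cmp C h (c_cmp C g f) = c_cmp C (c_cmp C h g) f)"

definition iso :: "('o,'m,'x) cat_scheme \<Rightarrow> 'o \<Rightarrow> 'o \<Rightarrow> 'm \<Rightarrow> bool" where
  "iso C X Y f \<longleftrightarrow> f \<in> hom C X Y \<and>
     (\<exists>g \<in> hom C Y X. c_cmp C g f = c_id C X \<and> c_cmp C f g = c_id C Y)"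

record ('o,'m) smcc = "('o,'m) cat" +
  m_unit  :: 'o
  m_tens  :: "'o \<Rightarrow> 'o \<Rightarrow> 'o"
  m_tensm :: "'m \<Rightarrow> 'm \<Rightarrow> 'm"
  m_assoc :: "'o \<Rightarrow> 'o \<Rightarrow> 'o \<Rightarrow> 'm"
  m_lunit :: "'o \<Rightarrow> 'm"
  m_runit :: "'o \<Rightarrow> 'm"
  m_sym   :: "'o \<Rightarrow> 'o \<Rightarrow> 'm"
  m_lolli :: "'o \<Rightarrow> 'o \<Rightarrow> 'o"
  m_ev    :: "'o \<Rightarrow> 'o \<Rightarrow> 'm"

definition is_smcc :: "('o,'m,'x) smcc_scheme \<Rightarrow> bool" where
  "is_smcc B \<longleftrightarrow> category B \<and>
   \<comment> \<open>tensor is a bifunctor\<close>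
   (\<forall>f g. f \<in> c_arr B \<longrightarrow> g \<in> c_arr B \<longrightarrow>
      m_tensm B f g \<in> hom B (m_tens B (c_dom B f) (c_dom B g)) (m_tens B (c_cod B f) (c_cod B g))) \<and>
   (\<forall>X Y. m_tensm B (c_id B X) (c_id B Y) = c_id B (m_tens B X Y)) \<and>
   (\<forall>f g f' g'. f \<in> c_arr B \<longrightarrow> g \<in> c_arr B \<longrightarrow> f' \<in> c_arr B \<longrightarrow> g' \<in> c_arr B \<longrightarrow>
      c_cod B f = c_dom B g \<longrightarrow> c_cod B f' = c_dom B g' \<longrightarrow>
      m_tensm B (c_cmp B g f) (c_cmp B g' f') = c_cmp B (m_tensm B g g') (m_tensm B f f')) \<and>
   \<comment> \<open>structural isomorphisms\<close>
   (\<forall>X Y Z. iso B (m_tens B (m_tens B X Y) Z) (m_tens B X (m_tens B Y Z)) (m_assoc B X Y Z)) \<and>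
   (\<forall>X. iso B (m_tens B (m_unit B) X) X (m_lunit B X)) \<and>
   (\<forall>X. iso B (m_tens B X (m_unit B)) X (m_runit B X)) \<and>
   (\<forall>X Y. iso B (m_tens B X Y) (m_tens B Y X) (m_sym B X Y)) \<and>
   \<comment> \<open>naturality\<close>
   (\<forall>f g h. f \<in> c_arr B \<longrightarrow> g \<in> c_arr B \<longrightarrow> h \<in> c_arr B \<longrightarrow>
      c_cmp B (m_assoc B (c_cod B f) (c_cod B g) (c_cod B h)) (m_tensm B (m_tensm B f g) h) =
      c_cmp B (m_tensm B f (m_tensm B g h)) (m_assoc B (c_dom B f) (c_dom B g) (c_dom B h))) \<and>
   (\<forall>f. f \<in> c_arr B \<longrightarrow>
      c_cmp B (m_lunit B (c_cod B f)) (m_tensm B (c_id B (m_unit B)) f) = c_cmp B f (m_lunit B (c_dom B f))) \<and>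
   (\<forall>f. f \<in> c_arr B \<longrightarrow>
      c_cmp B (m_runit B (c_cod B f)) (m_tensm B f (c_id B (m_unit B))) = c_cmp B f (m_runit B (c_dom B f))) \<and>
   (\<forall>f g. f \<in> c_arr B \<longrightarrow> g \<in> c_arr B \<longrightarrow>
      c_cmp B (m_sym B (c_cod B f) (c_cod B g)) (m_tensm B f g) =
      c_cmp B (m_tensm B g f) (m_sym B (c_dom B f) (c_dom B g))) \<and>
   \<comment> \<open>pentagon\<close>
   (\<forall>W X Y Z.
      c_cmp B (m_assoc B W X (m_tens B Y Z)) (m_assoc B (m_tens B W X) Y Z) =
      c_cmp B (m_tensm B (c_id B W) (m_assoc B X Y Z))
        (c_cmp B (m_assoc B W (m_tens B X Y) Z) (m_tensm B (m_assoc B W X Y) (c_id B Z)))) \<and>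
   \<comment> \<open>triangle\<close>
   (\<forall>X Y. c_cmp B (m_tensm B (c_id B X) (m_lunit B Y)) (m_assoc B X (m_unit B) Y) =
          m_tensm B (m_runit B X) (c_id B Y)) \<and>
   \<comment> \<open>symmetry and hexagon\<close>
   (\<forall>X Y. c_cmp B (m_sym B Y X) (m_sym B X Y) = c_id B (m_tens B X Y)) \<and>
   (\<forall>X Y Z.
      c_cmp B (m_assoc B Y Z X) (c_cmp B (m_sym B X (m_tens B Y Z)) (m_assoc B X Y Z)) =
      c_cmp B (m_tensm B (c_id B Y) (m_sym B X Z))
        (c_cmp B (m_assoc B Y X Z) (m_tensm B (m_sym B X Y) (c_id B Z)))) \<and>
   \<comment> \<open>closedness: - \<otimes> X \<stileturn> X \<multimap> -, with counit ev\<close>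
   (\<forall>X Y. m_ev B X Y \<in> hom B (m_tens B (m_lolli B X Y) X) Y) \<and>
   (\<forall>X Y Z f. f \<in> hom B (m_tens B Z X) Y \<longrightarrow>
      (\<exists>!h. h \<in> hom B Z (m_lolli B X Y) \<and> c_cmp B (m_ev B X Y) (m_tensm B h (c_id B X)) = f))"

section \<open>Strong monads on \<open>\<bbbB>\<close> (Kleisli triple presentation)\<close>

record ('o,'m) smonad =
  t_ob  :: "'o \<Rightarrow> 'o"
  t_eta :: "'o \<Rightarrow> 'm"
  t_ext :: "'m \<Rightarrow> 'm"
  t_str :: "'o \<Rightarrow> 'o \<Rightarrow> 'm"

definition t_map :: "('o,'m,'x) smcc_scheme \<Rightarrow> ('o,'m) smonad \<Rightarrow> 'm \<Rightarrow> 'm" where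
  "t_map B T f = t_ext T (c_cmp B (t_eta T (c_cod B f)) f)"

definition strong_monad :: "('o,'m,'x) smcc_scheme \<Rightarrow> ('o,'m) smonad \<Rightarrow> bool" where
  "strong_monad B T \<longleftrightarrow>
   (\<forall>X. t_eta T X \<in> hom B X (t_ob T X)) \<and>
   (\<forall>X Y f. f \<in> hom B X (t_ob T Y) \<longrightarrow> t_ext T f \<in> hom B (t_ob T X) (t_ob T Y)) \<and>
   (\<forall>X. t_ext T (t_eta T X) = c_id B (t_ob T X)) \<and>
   (\<forall>X Y f. f \<in> hom B X (t_ob T Y) \<longrightarrow> c_cmp B (t_ext T f) (t_eta T X) = f) \<and>
   (\<forall>X Y Z f g. f \<in> hom B X (t_ob T Y) \<longrightarrow> g \<in> hom B Y (t_ob T Z) \<longrightarrow>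
      c_cmp B (t_ext T g) (t_ext T f) = t_ext T (c_cmp B (t_ext T g) f)) \<and>
   \<comment> \<open>strength\<close>
   (\<forall>X Y. t_str T X Y \<in> hom B (m_tens B X (t_ob T Y)) (t_ob T (m_tens B X Y))) \<and>
   (\<forall>f g. f \<in> c_arr B \<longrightarrow> g \<in> c_arr B \<longrightarrow>
      c_cmp B (t_str T (c_cod B f) (c_cod B g)) (m_tensm B f (t_map B T g)) =
      c_cmp B (t_map B T (m_tensm B f g)) (t_str T (c_dom B f) (c_dom B g))) \<and>
   (\<forall>Y. c_cmp B (t_map B T (m_lunit B Y)) (t_str T (m_unit B) Y) = m_lunit B (t_ob T Y)) \<and>
   (\<forall>X Y Z. c_cmp B (t_map B T (m_assoc B X Y Z)) (t_str T (m_tens B X Y) Z) =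
      c_cmp B (t_str T X (m_tens B Y Z))
        (c_cmp B (m_tensm B (c_id B X) (t_str T Y Z)) (m_assoc B X Y (t_ob T Z)))) \<and>
   (\<forall>X Y. c_cmp B (t_str T X Y) (m_tensm B (c_id B X) (t_eta T Y)) = t_eta T (m_tens B X Y)) \<and>
   (\<forall>X Y Z f. f \<in> hom B Y (t_ob T Z) \<longrightarrow>
      c_cmp B (t_str T X Z) (m_tensm B (c_id B X) (t_ext T f)) =
      c_cmp B (t_ext T (c_cmp B (t_str T X Z) (m_tensm B (c_id B X) f))) (t_str T X Y))"

definition ddag :: "('o,'m,'x) smcc_scheme \<Rightarrow> ('o,'m) smonad \<Rightarrow> 'o \<Rightarrow> 'o \<Rightarrow> 'm \<Rightarrow> 'm" where
  "ddag B T X Y f = c_cmp B (t_ext T f) (t_str T X Y)"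

definition kl :: "('o,'m,'x) smcc_scheme \<Rightarrow> ('o,'m) smonad \<Rightarrow> 'o \<Rightarrow> 'o \<Rightarrow> 'm" where
  "kl B T X Y = ddag B T (m_lolli B X (t_ob T Y)) X (m_ev B X (t_ob T Y))"

section \<open>Cartesian categories (the monoidal structure of \<open>\<bbbE>\<close>)\<close>

record ('o,'m) ccat = "('o,'m) cat" +
  k_one  :: 'o
  k_prod :: "'o \<Rightarrow> 'o \<Rightarrow> 'o"
  k_fst  :: "'o \<Rightarrow> 'o \<Rightarrow> 'm"
  k_snd  :: "'o \<Rightarrow> 'o \<Rightarrow> 'm"

definition cartesian :: "('o,'m,'x) ccat_scheme \<Rightarrow> bool" where
  "cartesian E \<longleftrightarrow> category E \<and>
   (\<forall>A. \<exists>!h. h \<in> hom E A (k_one E)) \<and>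
   (\<forall>A C. k_fst E A C \<in> hom E (k_prod E A C) A \<and> k_snd E A C \<in> hom E (k_prod E A C) C) \<and>
   (\<forall>Z A C f g. f \<in> hom E Z A \<longrightarrow> g \<in> hom E Z C \<longrightarrow>
      (\<exists>!h. h \<in> hom E Z (k_prod E A C) \<and> c_cmp E (k_fst E A C) h = f \<and> c_cmp E (k_snd E A C) h = g))"

definition kpair :: "('o,'m,'x) ccat_scheme \<Rightarrow> 'm \<Rightarrow> 'm \<Rightarrow> 'm" where
  "kpair E f g = (THE h. h \<in> hom E (c_dom E f) (k_prod E (c_cod E f) (c_cod E g)) \<and>
      c_cmp E (k_fst E (c_cod E f) (c_cod E g)) h = f \<and> c_cmp E (k_snd E (c_cod E f) (c_cod E g)) h = g)"

definition kprodm :: "('o,'m,'x) ccat_scheme \<Rightarrow> 'm \<Rightarrow> 'm \<Rightarrow> 'm" where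
  "kprodm E f g = kpair E (c_cmp E f (k_fst E (c_dom E f) (c_dom E g)))
                          (c_cmp E g (k_snd E (c_dom E f) (c_dom E g)))"

definition kassoc :: "('o,'m,'x) ccat_scheme \<Rightarrow> 'o \<Rightarrow> 'o \<Rightarrow> 'o \<Rightarrow> 'm" where
  "kassoc E A C D = kpair E (c_cmp E (k_fst E A C) (k_fst E (k_prod E A C) D))
      (kpair E (c_cmp E (k_snd E A C) (k_fst E (k_prod E A C) D)) (k_snd E (k_prod E A C) D))"

definition klunit :: "('o,'m,'x) ccat_scheme \<Rightarrow> 'o \<Rightarrow> 'm" where
  "klunit E A = k_snd E (k_one E) A"

definition krunit :: "('o,'m,'x) ccat_scheme \<Rightarrow> 'o \<Rightarrow> 'm" where
  "krunit E A = k_fst E A (k_one E)"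

definition ksym :: "('o,'m,'x) ccat_scheme \<Rightarrow> 'o \<Rightarrow> 'o \<Rightarrow> 'm" where
  "ksym E A C = kpair E (k_snd E A C) (k_fst E A C)"

record ('a,'b,'c,'d) wref =
  p_ob   :: "'c \<Rightarrow> 'a"
  p_mor  :: "'d \<Rightarrow> 'b"
  l_ob   :: "'a \<Rightarrow> 'c"           (* L on objects; unit of L \<stileturn> p is the identity *)
  w_pitch :: "'a \<Rightarrow> 'c \<Rightarrow> 'c"
  w_ev   :: "'a \<Rightarrow> 'c \<Rightarrow> 'd"

definition weakly_closed_cartesian_refinement ::
  "('a,'b,'x) smcc_scheme \<Rightarrow> ('c,'d,'y) ccat_scheme \<Rightarrow> ('a,'b,'c,'d) wref \<Rightarrow> bool" where
  "weakly_closed_cartesian_refinement B E R \<longleftrightarrow> is_smcc B \<and> cartesian E \<and>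
   \<comment> \<open>p is a functor\<close>
   (\<forall>f. f \<in> c_arr E \<longrightarrow> p_mor R f \<in> hom B (p_ob R (c_dom E f)) (p_ob R (c_cod E f))) \<and>
   (\<forall>A. p_mor R (c_id E A) = c_id B (p_ob R A)) \<and>
   (\<forall>f g. f \<in> c_arr E \<longrightarrow> g \<in> c_arr E \<longrightarrow> c_cod E f = c_dom E g \<longrightarrow>
      p_mor R (c_cmp E g f) = c_cmp B (p_mor R g) (p_mor R f)) \<and>
   \<comment> \<open>(a) p strict symmetric monoidal (w.r.t. the cartesian structure of E) and faithful\<close>
   p_ob R (k_one E) = m_unit B \<and>
   (\<forall>A C. p_ob R (k_prod E A C) = m_tens B (p_ob R A) (p_ob R C)) \<and>
   (\<forall>f g. f \<in> c_arr E \<longrightarrow> g \<in> c_arr E \<longrightarrow> p_mor R (kprodm E f g) = m_tensm B (p_mor R f) (p_mor R g)) \<and>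
   (\<forall>A C D. p_mor R (kassoc E A C D) = m_assoc B (p_ob R A) (p_ob R C) (p_ob R D)) \<and>
   (\<forall>A. p_mor R (klunit E A) = m_lunit B (p_ob R A)) \<and>
   (\<forall>A. p_mor R (krunit E A) = m_runit B (p_ob R A)) \<and>
   (\<forall>A C. p_mor R (ksym E A C) = m_sym B (p_ob R A) (p_ob R C)) \<and>
   (\<forall>A C f g. f \<in> hom E A C \<longrightarrow> g \<in> hom E A C \<longrightarrow> p_mor R f = p_mor R g \<longrightarrow> f = g) \<and>
   \<comment> \<open>(b) L \<stileturn> p with identity unit\<close>
   (\<forall>X. p_ob R (l_ob R X) = X) \<and>
   (\<forall>X A f. f \<in> hom B X (p_ob R A) \<longrightarrow> (\<exists>!g. g \<in> hom E (l_ob R X) A \<and> p_mor R g = f)) \<and>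
   \<comment> \<open>(c) - \<times> LX \<stileturn> X \<pitchfork> -\<close>
   (\<forall>X A. w_ev R X A \<in> hom E (k_prod E (w_pitch R X A) (l_ob R X)) A) \<and>
   (\<forall>X A Z g. g \<in> hom E (k_prod E Z (l_ob R X)) A \<longrightarrow>
      (\<exists>!h. h \<in> hom E Z (w_pitch R X A) \<and>
            c_cmp E (w_ev R X A) (kprodm E h (c_id E (l_ob R X))) = g)) \<and>
   \<comment> \<open>(d) (p,p) is a map of adjunctions\<close>
   (\<forall>X A. p_ob R (w_pitch R X A) = m_lolli B X (p_ob R A) \<and>
          p_mor R (w_ev R X A) = m_ev B X (p_ob R A))"

definition dotarr :: "('a,'b,'c,'d) wref \<Rightarrow> ('c,'d,'y) ccat_scheme \<Rightarrow> 'b \<Rightarrow> 'c \<Rightarrow> 'c \<Rightarrow> bool" where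
  "dotarr R E f A C \<longleftrightarrow> (\<exists>h \<in> hom E A C. p_mor R h = f)"

definition bpair :: "('a,'b,'x) smcc_scheme \<Rightarrow> ('c,'d,'y) ccat_scheme \<Rightarrow> ('a,'b,'c,'d) wref \<Rightarrow>
    'c \<Rightarrow> 'c \<Rightarrow> 'b \<Rightarrow> 'b \<Rightarrow> 'b" where
  "bpair B E R Z W f g = (THE h. h \<in> hom B (c_dom B f) (p_ob R (k_prod E Z W)) \<and>
      c_cmp B (p_mor R (k_fst E Z W)) h = f \<and> c_cmp B (p_mor R (k_snd E Z W)) h = g)"

definition preordered_monoid :: "('g \<Rightarrow> 'g \<Rightarrow> bool) \<Rightarrow> 'g \<Rightarrow> ('g \<Rightarrow> 'g \<Rightarrow> 'g) \<Rightarrow> bool" where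
  "preordered_monoid le one mult \<longleftrightarrow>
    (\<forall>a. le a a) \<and> (\<forall>a b c. le a b \<longrightarrow> le b c \<longrightarrow> le a c) \<and>
    (\<forall>a b c. mult (mult a b) c = mult a (mult b c)) \<and>
    (\<forall>a. mult one a = a \<and> mult a one = a) \<and>
    (\<forall>a a' b b'. le a a' \<longrightarrow> le b b' \<longrightarrow> le (mult a b) (mult a' b'))"

definition ord_le :: "('a,'b,'x) smcc_scheme \<Rightarrow> ('c,'d,'y) ccat_scheme \<Rightarrow> ('a,'b,'c,'d) wref \<Rightarrow>
    ('a,'b) smonad \<Rightarrow> ('a \<Rightarrow> 'c) \<Rightarrow> ('a \<Rightarrow> 'c) \<Rightarrow> bool" where
  "ord_le B E R T G G' \<longleftrightarrow> (\<forall>X. dotarr R E (c_id B (t_ob T X)) (G X) (G' X))"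

definition mono_ord :: "('a,'b,'x) smcc_scheme \<Rightarrow> ('c,'d,'y) ccat_scheme \<Rightarrow> ('a,'b,'c,'d) wref \<Rightarrow>
    ('a,'b) smonad \<Rightarrow> ('g \<Rightarrow> 'g \<Rightarrow> bool) \<Rightarrow> ('g \<Rightarrow> 'a \<Rightarrow> 'c) \<Rightarrow> bool" where
  "mono_ord B E R T le \<Delta> \<longleftrightarrow>
     (\<forall>\<alpha> X. p_ob R (\<Delta> \<alpha> X) = t_ob T X) \<and>
     (\<forall>\<alpha> \<beta>. le \<alpha> \<beta> \<longrightarrow> ord_le B E R T (\<Delta> \<alpha>) (\<Delta> \<beta>))"

definition Asign :: "('a,'b,'x) smcc_scheme \<Rightarrow> ('c,'d,'y) ccat_scheme \<Rightarrow> ('a,'b,'c,'d) wref \<Rightarrow>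
    ('a,'b) smonad \<Rightarrow> ('g \<Rightarrow> 'g \<Rightarrow> bool) \<Rightarrow> ('g \<Rightarrow> 'g \<Rightarrow> 'g) \<Rightarrow> ('g \<Rightarrow> 'a \<Rightarrow> 'c) set" where
  "Asign B E R T le mult = {\<Delta>. mono_ord B E R T le \<Delta> \<and>
     (\<forall>\<alpha> \<beta> X Y. dotarr R E (kl B T X Y)
        (k_prod E (w_pitch R X (\<Delta> \<alpha> Y)) (\<Delta> \<beta> X)) (\<Delta> (mult \<beta> \<alpha>) Y))}"

definition Comp :: "('a,'b,'x) smcc_scheme \<Rightarrow> ('c,'d,'y) ccat_scheme \<Rightarrow> ('a,'b,'c,'d) wref \<Rightarrow>
    ('a,'b) smonad \<Rightarrow> ('g \<Rightarrow> 'g \<Rightarrow> bool) \<Rightarrow> ('g \<Rightarrow> 'g \<Rightarrow> 'g) \<Rightarrow> ('g \<Rightarrow> 'a \<Rightarrow> 'c) set" where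
  "Comp B E R T le mult = {\<Delta>. mono_ord B E R T le \<Delta> \<and>
     (\<forall>\<alpha> \<beta> Z X Y f g.
        f \<in> hom B (p_ob R Z) (t_ob T X) \<longrightarrow>
        g \<in> hom B (m_tens B (p_ob R Z) X) (t_ob T Y) \<longrightarrow>
        dotarr R E f Z (\<Delta> \<alpha> X) \<longrightarrow>
        dotarr R E g (k_prod E Z (l_ob R X)) (\<Delta> \<beta> Y) \<longrightarrow>
        dotarr R E (c_cmp B (ddag B T (p_ob R Z) X g) (bpair B E R Z (\<Delta> \<alpha> X) (c_id B (p_ob R Z)) f))
          Z (\<Delta> (mult \<alpha> \<beta>) Y))}"

end

theory Submission
  imports Defs
begin

(* Both classes are cut out of the monotone maps by a composition condition, and naturality of
   the strength translates one condition into the other: for h : Z -> (X -o TY),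
     (ev o (h (x) id))^ddagger o <id, f> = kl o (h (x) id) o <id, f>.
   Given f above Delta alpha X and g above Delta beta Y, transpose g to
   h : Z -> X pitchfork Delta beta Y; the lift of kl provided by Asign, precomposed with <h, f>,
   lifts g^ddagger o <id, f>. Conversely, kl itself is g^ddagger o <id, f> for the generic
   instance Z = (X pitchfork Delta alpha Y) x Delta beta X, f = p snd, g = p (ev o (fst x id)). *)

lemma
  assumes "category C"
  shows cat_id_hom: "c_id C X \<in> hom C X X"
    and cat_comp_hom: "f \<in> hom C X Y \<Longrightarrow> g \<in> hom C Y Z \<Longrightarrow> c_cmp C g f \<in> hom C X Z"
    and cat_id_left: "f \<in> hom C X Y \<Longrightarrow> c_cmp C (c_id C Y) f = f"
    and cat_id_right: "f \<in> hom C X Y \<Longrightarrow> c_cmp C f (c_id C X) = f"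
    and cat_assoc: "f \<in> hom C W X \<Longrightarrow> g \<in> hom C X Y \<Longrightarrow> h \<in> hom C Y Z \<Longrightarrow>
      c_cmp C h (c_cmp C g f) = c_cmp C (c_cmp C h g) f"
  using assms unfolding category_def hom_def by auto

locale cartesian_category =
  fixes E :: "('o, 'm, 'x) ccat_scheme"
  assumes cartesian: "cartesian E"
begin

lemma category_E: "category E"
  using cartesian unfolding cartesian_def by simp

lemma fst_hom: "k_fst E A C \<in> hom E (k_prod E A C) A"
  and snd_hom: "k_snd E A C \<in> hom E (k_prod E A C) C"
  using cartesian unfolding cartesian_def by simp_all

lemma prod_universal:
  "f \<in> hom E Z A \<Longrightarrow> g \<in> hom E Z C \<Longrightarrow>
    \<exists>!h. h \<in> hom E Z (k_prod E A C) \<and> c_cmp E (k_fst E A C) h = f \<and> c_cmp E (k_snd E A C) h = g"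
  using cartesian unfolding cartesian_def by simp

lemma
  assumes "f \<in> hom E Z A" "g \<in> hom E Z C"
  shows kpair_hom: "kpair E f g \<in> hom E Z (k_prod E A C)"
    and kpair_fst: "c_cmp E (k_fst E A C) (kpair E f g) = f"
    and kpair_snd: "c_cmp E (k_snd E A C) (kpair E f g) = g"
proof -
  have "c_dom E f = Z" "c_cod E f = A" "c_cod E g = C"
    using assms unfolding hom_def by auto
  then have "kpair E f g \<in> hom E Z (k_prod E A C) \<and>
      c_cmp E (k_fst E A C) (kpair E f g) = f \<and> c_cmp E (k_snd E A C) (kpair E f g) = g"
    unfolding kpair_def using theI'[OF prod_universal[OF assms]] by simp
  then show "kpair E f g \<in> hom E Z (k_prod E A C)" "c_cmp E (k_fst E A C) (kpair E f g) = f"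
    "c_cmp E (k_snd E A C) (kpair E f g) = g" by auto
qed

lemma prod_arrow_eqI:
  assumes "h \<in> hom E Z (k_prod E A C)" "h' \<in> hom E Z (k_prod E A C)"
    and "c_cmp E (k_fst E A C) h = c_cmp E (k_fst E A C) h'"
    and "c_cmp E (k_snd E A C) h = c_cmp E (k_snd E A C) h'"
  shows "h = h'"
  using prod_universal[OF cat_comp_hom[OF category_E assms(1) fst_hom]
      cat_comp_hom[OF category_E assms(1) snd_hom]] assms by (metis (no_types, lifting))

lemma kpair_fst_snd: "kpair E (k_fst E A C) (k_snd E A C) = c_id E (k_prod E A C)"
  by (rule prod_arrow_eqI[OF kpair_hom[OF fst_hom snd_hom] cat_id_hom[OF category_E]])
    (simp_all add: kpair_fst[OF fst_hom snd_hom] kpair_snd[OF fst_hom snd_hom]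
      cat_id_right[OF category_E fst_hom] cat_id_right[OF category_E snd_hom])

lemma
  assumes "f \<in> hom E A A'" "g \<in> hom E C C'"
  shows kprodm_hom: "kprodm E f g \<in> hom E (k_prod E A C) (k_prod E A' C')"
    and kprodm_fst: "c_cmp E (k_fst E A' C') (kprodm E f g) = c_cmp E f (k_fst E A C)"
    and kprodm_snd: "c_cmp E (k_snd E A' C') (kprodm E f g) = c_cmp E g (k_snd E A C)"
proof -
  have "c_dom E f = A" "c_dom E g = C"
    using assms unfolding hom_def by auto
  moreover note fg = cat_comp_hom[OF category_E fst_hom assms(1)]
    cat_comp_hom[OF category_E snd_hom assms(2)]
  ultimately show "kprodm E f g \<in> hom E (k_prod E A C) (k_prod E A' C')"
    "c_cmp E (k_fst E A' C') (kprodm E f g) = c_cmp E f (k_fst E A C)"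
    "c_cmp E (k_snd E A' C') (kprodm E f g) = c_cmp E g (k_snd E A C)"
    unfolding kprodm_def using kpair_hom[OF fg] kpair_fst[OF fg] kpair_snd[OF fg] by simp_all
qed

lemma kprodm_comp_kpair:
  assumes f: "f \<in> hom E A A'" and g: "g \<in> hom E C C'"
    and u: "u \<in> hom E Z A" and v: "v \<in> hom E Z C"
  shows "c_cmp E (kprodm E f g) (kpair E u v) = kpair E (c_cmp E f u) (c_cmp E g v)"
proof (rule prod_arrow_eqI)
  note fg = kprodm_hom[OF f g] and uv = kpair_hom[OF u v]
  note fu = cat_comp_hom[OF category_E u f] and gv = cat_comp_hom[OF category_E v g]
  show "c_cmp E (kprodm E f g) (kpair E u v) \<in> hom E Z (k_prod E A' C')"
    using cat_comp_hom[OF category_E uv fg] .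
  show "kpair E (c_cmp E f u) (c_cmp E g v) \<in> hom E Z (k_prod E A' C')"
    using kpair_hom[OF fu gv] .
  have "c_cmp E (k_fst E A' C') (c_cmp E (kprodm E f g) (kpair E u v)) =
      c_cmp E (c_cmp E f (k_fst E A C)) (kpair E u v)"
    using cat_assoc[OF category_E uv fg fst_hom] kprodm_fst[OF f g] by simp
  also have "\<dots> = c_cmp E f u"
    using cat_assoc[OF category_E uv fst_hom f] kpair_fst[OF u v] by simp
  finally show "c_cmp E (k_fst E A' C') (c_cmp E (kprodm E f g) (kpair E u v)) =
      c_cmp E (k_fst E A' C') (kpair E (c_cmp E f u) (c_cmp E g v))"
    using kpair_fst[OF fu gv] by simp
  have "c_cmp E (k_snd E A' C') (c_cmp E (kprodm E f g) (kpair E u v)) =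
      c_cmp E (c_cmp E g (k_snd E A C)) (kpair E u v)"
    using cat_assoc[OF category_E uv fg snd_hom] kprodm_snd[OF f g] by simp
  also have "\<dots> = c_cmp E g v"
    using cat_assoc[OF category_E uv snd_hom g] kpair_snd[OF u v] by simp
  finally show "c_cmp E (k_snd E A' C') (c_cmp E (kprodm E f g) (kpair E u v)) =
      c_cmp E (k_snd E A' C') (kpair E (c_cmp E f u) (c_cmp E g v))"
    using kpair_snd[OF fu gv] by simp
qed

end

locale weakly_closed_refinement =
  fixes B :: "('a, 'b, 'x) smcc_scheme" and E :: "('c, 'd, 'y) ccat_scheme"
    and R :: "('a, 'b, 'c, 'd) wref"
  assumes refinement: "weakly_closed_cartesian_refinement B E R"
begin

sublocale cartesian_category E
  using refinement unfolding weakly_closed_cartesian_refinement_def by unfold_locales simp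

lemma p_hom: "f \<in> hom E A C \<Longrightarrow> p_mor R f \<in> hom B (p_ob R A) (p_ob R C)"
  using refinement unfolding weakly_closed_cartesian_refinement_def hom_def by auto

lemma p_id: "p_mor R (c_id E A) = c_id B (p_ob R A)"
  using refinement unfolding weakly_closed_cartesian_refinement_def by simp

lemma p_comp:
  "f \<in> hom E A C \<Longrightarrow> g \<in> hom E C D \<Longrightarrow> p_mor R (c_cmp E g f) = c_cmp B (p_mor R g) (p_mor R f)"
  using refinement unfolding weakly_closed_cartesian_refinement_def hom_def by auto

lemma p_ob_prod: "p_ob R (k_prod E A C) = m_tens B (p_ob R A) (p_ob R C)"
  using refinement unfolding weakly_closed_cartesian_refinement_def by simp

lemma p_kprodm:
  "f \<in> hom E A A' \<Longrightarrow> g \<in> hom E C C' \<Longrightarrow> p_mor R (kprodm E f g) = m_tensm B (p_mor R f) (p_mor R g)"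
  using refinement unfolding weakly_closed_cartesian_refinement_def hom_def by auto

lemma p_faithful: "f \<in> hom E A C \<Longrightarrow> g \<in> hom E A C \<Longrightarrow> p_mor R f = p_mor R g \<Longrightarrow> f = g"
  using refinement unfolding weakly_closed_cartesian_refinement_def by blast

lemma p_ob_L: "p_ob R (l_ob R X) = X"
  using refinement unfolding weakly_closed_cartesian_refinement_def by simp

lemma L_transpose: "f \<in> hom B X (p_ob R A) \<Longrightarrow> \<exists>g \<in> hom E (l_ob R X) A. p_mor R g = f"
  using refinement unfolding weakly_closed_cartesian_refinement_def by blast

lemma pitch_curry:
  "g \<in> hom E (k_prod E Z (l_ob R X)) A \<Longrightarrow>
    \<exists>h \<in> hom E Z (w_pitch R X A). c_cmp E (w_ev R X A) (kprodm E h (c_id E (l_ob R X))) = g"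
  using refinement unfolding weakly_closed_cartesian_refinement_def by blast

lemma w_ev_hom: "w_ev R X A \<in> hom E (k_prod E (w_pitch R X A) (l_ob R X)) A"
  using refinement unfolding weakly_closed_cartesian_refinement_def by simp

lemma p_ob_pitch: "p_ob R (w_pitch R X A) = m_lolli B X (p_ob R A)"
  and p_w_ev: "p_mor R (w_ev R X A) = m_ev B X (p_ob R A)"
  using refinement unfolding weakly_closed_cartesian_refinement_def by simp_all

lemma p_prod_arrow_eqI:
  assumes h: "h \<in> hom B X (p_ob R (k_prod E Z W))" and h': "h' \<in> hom B X (p_ob R (k_prod E Z W))"
    and fst_eq: "c_cmp B (p_mor R (k_fst E Z W)) h = c_cmp B (p_mor R (k_fst E Z W)) h'"
    and snd_eq: "c_cmp B (p_mor R (k_snd E Z W)) h = c_cmp B (p_mor R (k_snd E Z W)) h'"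
  shows "h = h'"
proof -
  obtain g where g: "g \<in> hom E (l_ob R X) (k_prod E Z W)" "p_mor R g = h"
    using L_transpose[OF h] by blast
  obtain g' where g': "g' \<in> hom E (l_ob R X) (k_prod E Z W)" "p_mor R g' = h'"
    using L_transpose[OF h'] by blast
  have "c_cmp E (k_fst E Z W) g = c_cmp E (k_fst E Z W) g'"
    by (rule p_faithful[OF cat_comp_hom[OF category_E g(1) fst_hom]
          cat_comp_hom[OF category_E g'(1) fst_hom]])
      (simp add: p_comp[OF g(1) fst_hom] p_comp[OF g'(1) fst_hom] g g' fst_eq)
  moreover have "c_cmp E (k_snd E Z W) g = c_cmp E (k_snd E Z W) g'"
    by (rule p_faithful[OF cat_comp_hom[OF category_E g(1) snd_hom]
          cat_comp_hom[OF category_E g'(1) snd_hom]])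
      (simp add: p_comp[OF g(1) snd_hom] p_comp[OF g'(1) snd_hom] g g' snd_eq)
  ultimately have "g = g'"
    by (rule prod_arrow_eqI[OF g(1) g'(1)])
  then show ?thesis
    using g g' by simp
qed

lemma bpair_p_kpair:
  assumes v: "v \<in> hom E A Z" and u: "u \<in> hom E A W"
  shows "bpair B E R Z W (p_mor R v) (p_mor R u) = p_mor R (kpair E v u)"
proof -
  note vu = kpair_hom[OF v u]
  have dom: "c_dom B (p_mor R v) = p_ob R A"
    using p_hom[OF v] unfolding hom_def by simp
  have fst: "c_cmp B (p_mor R (k_fst E Z W)) (p_mor R (kpair E v u)) = p_mor R v"
    using p_comp[OF vu fst_hom] kpair_fst[OF v u] by simp
  have snd: "c_cmp B (p_mor R (k_snd E Z W)) (p_mor R (kpair E v u)) = p_mor R u"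
    using p_comp[OF vu snd_hom] kpair_snd[OF v u] by simp
  show ?thesis
    unfolding bpair_def dom
  proof (rule the_equality)
    show "p_mor R (kpair E v u) \<in> hom B (p_ob R A) (p_ob R (k_prod E Z W)) \<and>
        c_cmp B (p_mor R (k_fst E Z W)) (p_mor R (kpair E v u)) = p_mor R v \<and>
        c_cmp B (p_mor R (k_snd E Z W)) (p_mor R (kpair E v u)) = p_mor R u"
      using p_hom[OF vu] fst snd by simp
  next
    fix h
    assume "h \<in> hom B (p_ob R A) (p_ob R (k_prod E Z W)) \<and>
        c_cmp B (p_mor R (k_fst E Z W)) h = p_mor R v \<and> c_cmp B (p_mor R (k_snd E Z W)) h = p_mor R u"
    then show "h = p_mor R (kpair E v u)"
      using p_prod_arrow_eqI[OF _ p_hom[OF vu]] fst snd by auto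
  qed
qed

end

locale smcc_strong_monad =
  fixes B :: "('o, 'm, 'x) smcc_scheme" and T :: "('o, 'm) smonad"
  assumes is_smcc: "is_smcc B" and strong_monad: "strong_monad B T"
begin

lemma category_B: "category B"
  using is_smcc unfolding is_smcc_def by simp

lemma tensm_hom:
  "f \<in> hom B A A' \<Longrightarrow> g \<in> hom B C C' \<Longrightarrow> m_tensm B f g \<in> hom B (m_tens B A C) (m_tens B A' C')"
  using is_smcc unfolding is_smcc_def hom_def by auto

lemma ev_hom: "m_ev B X Y \<in> hom B (m_tens B (m_lolli B X Y) X) Y"
  using is_smcc unfolding is_smcc_def by simp

lemma eta_hom: "t_eta T X \<in> hom B X (t_ob T X)"
  and ext_hom: "f \<in> hom B X (t_ob T Y) \<Longrightarrow> t_ext T f \<in> hom B (t_ob T X) (t_ob T Y)"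
  and ext_eta: "t_ext T (t_eta T X) = c_id B (t_ob T X)"
  and ext_comp_eta: "f \<in> hom B X (t_ob T Y) \<Longrightarrow> c_cmp B (t_ext T f) (t_eta T X) = f"
  and ext_comp_ext: "f \<in> hom B X (t_ob T Y) \<Longrightarrow> g \<in> hom B Y (t_ob T Z) \<Longrightarrow>
    c_cmp B (t_ext T g) (t_ext T f) = t_ext T (c_cmp B (t_ext T g) f)"
  and str_hom: "t_str T X Y \<in> hom B (m_tens B X (t_ob T Y)) (t_ob T (m_tens B X Y))"
  using strong_monad unfolding strong_monad_def by simp_all

lemma str_natural:
  "f \<in> hom B A A' \<Longrightarrow> g \<in> hom B C C' \<Longrightarrow>
    c_cmp B (t_str T A' C') (m_tensm B f (t_map B T g)) =
      c_cmp B (t_map B T (m_tensm B f g)) (t_str T A C)"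
  using strong_monad unfolding strong_monad_def hom_def by auto

lemma t_map_id: "t_map B T (c_id B X) = c_id B (t_ob T X)"
  using cat_id_hom[OF category_B, of X] cat_id_right[OF category_B eta_hom]
  unfolding t_map_def hom_def by (simp add: ext_eta)

lemma ddag_hom:
  "f \<in> hom B (m_tens B X Y) (t_ob T Z) \<Longrightarrow> ddag B T X Y f \<in> hom B (m_tens B X (t_ob T Y)) (t_ob T Z)"
  unfolding ddag_def by (rule cat_comp_hom[OF category_B str_hom ext_hom])

lemma kl_hom: "kl B T X Y \<in> hom B (m_tens B (m_lolli B X (t_ob T Y)) (t_ob T X)) (t_ob T Y)"
  unfolding kl_def by (rule ddag_hom[OF ev_hom])

lemma ddag_comp_tensor_id:
  assumes k: "k \<in> hom B A A'" and g: "g \<in> hom B (m_tens B A' X) (t_ob T Y)"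
  shows "c_cmp B (ddag B T A' X g) (m_tensm B k (c_id B (t_ob T X))) =
    ddag B T A X (c_cmp B g (m_tensm B k (c_id B X)))"
proof -
  let ?kX = "m_tensm B k (c_id B X)"
  have kX: "?kX \<in> hom B (m_tens B A X) (m_tens B A' X)"
    using tensm_hom[OF k cat_id_hom[OF category_B]] .
  have kTX: "m_tensm B k (c_id B (t_ob T X)) \<in> hom B (m_tens B A (t_ob T X)) (m_tens B A' (t_ob T X))"
    using tensm_hom[OF k cat_id_hom[OF category_B]] .
  have eta_kX: "c_cmp B (t_eta T (m_tens B A' X)) ?kX \<in> hom B (m_tens B A X) (t_ob T (m_tens B A' X))"
    using cat_comp_hom[OF category_B kX eta_hom] .
  have map_kX: "t_map B T ?kX = t_ext T (c_cmp B (t_eta T (m_tens B A' X)) ?kX)"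
    using kX unfolding t_map_def hom_def by simp
  have "c_cmp B (ddag B T A' X g) (m_tensm B k (c_id B (t_ob T X))) =
      c_cmp B (t_ext T g) (c_cmp B (t_str T A' X) (m_tensm B k (c_id B (t_ob T X))))"
    unfolding ddag_def using cat_assoc[OF category_B kTX str_hom ext_hom[OF g]] by simp
  also have "\<dots> = c_cmp B (t_ext T g) (c_cmp B (t_map B T ?kX) (t_str T A X))"
    using str_natural[OF k cat_id_hom[OF category_B]] by (simp add: t_map_id)
  also have "\<dots> = c_cmp B (c_cmp B (t_ext T g) (t_map B T ?kX)) (t_str T A X)"
    using cat_assoc[OF category_B str_hom ext_hom[OF eta_kX] ext_hom[OF g]] map_kX by simp
  also have "c_cmp B (t_ext T g) (t_map B T ?kX) = t_ext T (c_cmp B g ?kX)"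
    using ext_comp_ext[OF eta_kX g] cat_assoc[OF category_B kX eta_hom ext_hom[OF g]] ext_comp_eta[OF g]
    by (simp add: map_kX)
  finally show ?thesis
    unfolding ddag_def .
qed

end

locale refined_strong_monad = weakly_closed_refinement B E R + smcc_strong_monad B T
  for B :: "('a, 'b, 'x) smcc_scheme" and E :: "('c, 'd, 'y) ccat_scheme"
    and R :: "('a, 'b, 'c, 'd) wref" and T :: "('a, 'b) smonad"
begin

lemma kl_comp_p_kpair:
  assumes h: "h \<in> hom E Z (w_pitch R X D)" and D: "p_ob R D = t_ob T Y"
    and u: "u \<in> hom E Z W" and W: "p_ob R W = t_ob T X"
  shows "c_cmp B (kl B T X Y) (p_mor R (kpair E h u)) =
    c_cmp B (ddag B T (p_ob R Z) X (p_mor R (c_cmp E (w_ev R X D) (kprodm E h (c_id E (l_ob R X))))))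
      (bpair B E R Z W (c_id B (p_ob R Z)) (p_mor R u))"
proof -
  note id_E = cat_id_hom[OF category_E] and id_B = cat_id_hom[OF category_B]
  have ph: "p_mor R h \<in> hom B (p_ob R Z) (m_lolli B X (t_ob T Y))"
    using p_hom[OF h] by (simp add: p_ob_pitch D)
  have ph_id: "m_tensm B (p_mor R h) (c_id B (t_ob T X)) \<in>
      hom B (m_tens B (p_ob R Z) (t_ob T X)) (m_tens B (m_lolli B X (t_ob T Y)) (t_ob T X))"
    using tensm_hom[OF ph id_B] .
  have p_id_u: "p_mor R (kpair E (c_id E Z) u) \<in> hom B (p_ob R Z) (m_tens B (p_ob R Z) (t_ob T X))"
    using p_hom[OF kpair_hom[OF id_E u]] by (simp add: p_ob_prod W)
  have uncurry: "p_mor R (c_cmp E (w_ev R X D) (kprodm E h (c_id E (l_ob R X)))) =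
      c_cmp B (m_ev B X (t_ob T Y)) (m_tensm B (p_mor R h) (c_id B X))"
    using p_comp[OF kprodm_hom[OF h id_E] w_ev_hom] p_kprodm[OF h id_E]
    by (simp add: p_w_ev p_id p_ob_L D)
  have "kpair E h u = c_cmp E (kprodm E h (c_id E W)) (kpair E (c_id E Z) u)"
    using kprodm_comp_kpair[OF h id_E id_E u] cat_id_right[OF category_E h] cat_id_left[OF category_E u]
    by simp
  then have "p_mor R (kpair E h u) =
      c_cmp B (m_tensm B (p_mor R h) (c_id B (t_ob T X))) (p_mor R (kpair E (c_id E Z) u))"
    using p_comp[OF kpair_hom[OF id_E u] kprodm_hom[OF h id_E]] p_kprodm[OF h id_E]
    by (simp add: p_id W)
  then have "c_cmp B (kl B T X Y) (p_mor R (kpair E h u)) =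
      c_cmp B (c_cmp B (kl B T X Y) (m_tensm B (p_mor R h) (c_id B (t_ob T X))))
        (p_mor R (kpair E (c_id E Z) u))"
    using cat_assoc[OF category_B p_id_u ph_id kl_hom] by simp
  also have "\<dots> = c_cmp B
      (ddag B T (p_ob R Z) X (p_mor R (c_cmp E (w_ev R X D) (kprodm E h (c_id E (l_ob R X))))))
      (p_mor R (kpair E (c_id E Z) u))"
    unfolding kl_def uncurry ddag_comp_tensor_id[OF ph ev_hom] ..
  also have "p_mor R (kpair E (c_id E Z) u) = bpair B E R Z W (c_id B (p_ob R Z)) (p_mor R u)"
    using bpair_p_kpair[OF id_E u] by (simp add: p_id)
  finally show ?thesis .
qed

lemma Asign_subset_Comp: "Asign B E R T le mult \<subseteq> Comp B E R T le mult"
proof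
  fix \<Delta>
  assume "\<Delta> \<in> Asign B E R T le mult"
  then have mono: "mono_ord B E R T le \<Delta>"
    and kl_arrow: "\<And>\<alpha> \<beta> X Y. dotarr R E (kl B T X Y)
      (k_prod E (w_pitch R X (\<Delta> \<alpha> Y)) (\<Delta> \<beta> X)) (\<Delta> (mult \<beta> \<alpha>) Y)"
    unfolding Asign_def by auto
  have p_\<Delta>: "\<And>\<alpha> X. p_ob R (\<Delta> \<alpha> X) = t_ob T X"
    using mono unfolding mono_ord_def by auto
  show "\<Delta> \<in> Comp B E R T le mult"
    unfolding Comp_def
  proof (intro CollectI conjI allI impI mono)
    fix \<alpha> \<beta> Z X Y f g
    assume "f \<in> hom B (p_ob R Z) (t_ob T X)" "g \<in> hom B (m_tens B (p_ob R Z) X) (t_ob T Y)"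
      and "dotarr R E f Z (\<Delta> \<alpha> X)" "dotarr R E g (k_prod E Z (l_ob R X)) (\<Delta> \<beta> Y)"
    then obtain f' g' where f': "f' \<in> hom E Z (\<Delta> \<alpha> X)" "p_mor R f' = f"
      and g': "g' \<in> hom E (k_prod E Z (l_ob R X)) (\<Delta> \<beta> Y)" "p_mor R g' = g"
      unfolding dotarr_def by blast
    obtain h where h: "h \<in> hom E Z (w_pitch R X (\<Delta> \<beta> Y))"
      and g'_eq: "c_cmp E (w_ev R X (\<Delta> \<beta> Y)) (kprodm E h (c_id E (l_ob R X))) = g'"
      using pitch_curry[OF g'(1)] by blast
    obtain k where k: "k \<in> hom E (k_prod E (w_pitch R X (\<Delta> \<beta> Y)) (\<Delta> \<alpha> X)) (\<Delta> (mult \<alpha> \<beta>) Y)"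
      "p_mor R k = kl B T X Y"
      using kl_arrow[where \<alpha> = \<beta> and \<beta> = \<alpha>] unfolding dotarr_def by blast
    have "p_mor R (c_cmp E k (kpair E h f')) =
        c_cmp B (ddag B T (p_ob R Z) X g) (bpair B E R Z (\<Delta> \<alpha> X) (c_id B (p_ob R Z)) f)"
      using p_comp[OF kpair_hom[OF h f'(1)] k(1)] k(2) kl_comp_p_kpair[OF h p_\<Delta> f'(1) p_\<Delta>] g'_eq f' g'
      by simp
    then show "dotarr R E (c_cmp B (ddag B T (p_ob R Z) X g) (bpair B E R Z (\<Delta> \<alpha> X) (c_id B (p_ob R Z)) f))
        Z (\<Delta> (mult \<alpha> \<beta>) Y)"
      unfolding dotarr_def using cat_comp_hom[OF category_E kpair_hom[OF h f'(1)] k(1)] by metis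
  qed
qed

lemma Comp_subset_Asign: "Comp B E R T le mult \<subseteq> Asign B E R T le mult"
proof
  fix \<Delta>
  assume "\<Delta> \<in> Comp B E R T le mult"
  then have mono: "mono_ord B E R T le \<Delta>"
    and composable: "\<And>\<alpha> \<beta> Z X Y f g.
      f \<in> hom B (p_ob R Z) (t_ob T X) \<Longrightarrow> g \<in> hom B (m_tens B (p_ob R Z) X) (t_ob T Y) \<Longrightarrow>
      dotarr R E f Z (\<Delta> \<alpha> X) \<Longrightarrow> dotarr R E g (k_prod E Z (l_ob R X)) (\<Delta> \<beta> Y) \<Longrightarrow>
      dotarr R E (c_cmp B (ddag B T (p_ob R Z) X g) (bpair B E R Z (\<Delta> \<alpha> X) (c_id B (p_ob R Z)) f))
        Z (\<Delta> (mult \<alpha> \<beta>) Y)"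
    unfolding Comp_def by auto
  have p_\<Delta>: "\<And>\<alpha> X. p_ob R (\<Delta> \<alpha> X) = t_ob T X"
    using mono unfolding mono_ord_def by auto
  show "\<Delta> \<in> Asign B E R T le mult"
    unfolding Asign_def
  proof (intro CollectI conjI allI mono)
    fix \<alpha> \<beta> X Y
    let ?P = "w_pitch R X (\<Delta> \<alpha> Y)" and ?Q = "\<Delta> \<beta> X"
    let ?Z = "k_prod E ?P ?Q"
    let ?g = "c_cmp E (w_ev R X (\<Delta> \<alpha> Y)) (kprodm E (k_fst E ?P ?Q) (c_id E (l_ob R X)))"
    have g_hom: "?g \<in> hom E (k_prod E ?Z (l_ob R X)) (\<Delta> \<alpha> Y)"
      using cat_comp_hom[OF category_E kprodm_hom[OF fst_hom cat_id_hom[OF category_E]] w_ev_hom] .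
    have p_Z: "p_ob R ?Z = m_tens B (m_lolli B X (t_ob T Y)) (t_ob T X)"
      by (simp add: p_ob_prod p_ob_pitch p_\<Delta>)
    have "dotarr R E (c_cmp B (ddag B T (p_ob R ?Z) X (p_mor R ?g))
        (bpair B E R ?Z ?Q (c_id B (p_ob R ?Z)) (p_mor R (k_snd E ?P ?Q)))) ?Z (\<Delta> (mult \<beta> \<alpha>) Y)"
    proof (rule composable)
      show "p_mor R (k_snd E ?P ?Q) \<in> hom B (p_ob R ?Z) (t_ob T X)"
        using p_hom[OF snd_hom, of ?P ?Q] by (simp add: p_\<Delta>)
      show "p_mor R ?g \<in> hom B (m_tens B (p_ob R ?Z) X) (t_ob T Y)"
        using p_hom[OF g_hom] by (simp add: p_ob_prod p_ob_L p_\<Delta>)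
    qed (use snd_hom g_hom in \<open>auto simp: dotarr_def\<close>)
    moreover have "c_cmp B (ddag B T (p_ob R ?Z) X (p_mor R ?g))
        (bpair B E R ?Z ?Q (c_id B (p_ob R ?Z)) (p_mor R (k_snd E ?P ?Q))) = kl B T X Y"
      using kl_comp_p_kpair[OF fst_hom[of ?P ?Q] p_\<Delta> snd_hom[of ?P ?Q] p_\<Delta>] cat_id_right[OF category_B kl_hom]
      by (simp add: kpair_fst_snd p_id p_Z)
    ultimately show "dotarr R E (kl B T X Y) ?Z (\<Delta> (mult \<beta> \<alpha>) Y)"
      by simp
  qed
qed

end

theorem theorem8:
  fixes B :: "('a,'b) smcc" and E :: "('c,'d) ccat" and R :: "('a,'b,'c,'d) wref"
    and T :: "('a,'b) smonad"
    and le :: "'g \<Rightarrow> 'g \<Rightarrow> bool" and one :: 'g and mult :: "'g \<Rightarrow> 'g \<Rightarrow> 'g"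
  assumes "weakly_closed_cartesian_refinement B E R"
    and "strong_monad B T"
    and "preordered_monoid le one mult"
  shows "Asign B E R T le mult = Comp B E R T le mult"
proof -
  have "is_smcc B"
    using assms(1) unfolding weakly_closed_cartesian_refinement_def by simp
  then interpret refined_strong_monad B E R T
    using assms(1,2) by unfold_locales
  show ?thesis
    by (rule equalityI[OF Asign_subset_Comp Comp_subset_Asign])
qed

end
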